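(* In the multi-parameter setting described in the context, for every $\theta\in\Theta$, $$(C_\Upsilon)_{kl}=\sum_{i:p_i>0}\frac{1}{p_i}\frac{\partial p_i}{\partial\theta^k}\frac{\partial p_i}{\partial\theta^l}+4\,\mathrm{Re}\sum_{i<j}(p_i+p_j)\langle w_i^{(k)}|w_j\rangle\langle w_j|w_i^{(l)}\rangle+4\sum_{i:p_i>0}p_i\langle w_i^{(k)}|w_i\rangle\langle w_i|w_i^{(l)}\rangle,$$ where $|w_i^{(k)}\rangle=\partial|w_i\rangle/\partial\theta^k$.
   Context: Let $\Theta\subseteq\mathbb{R}^p$ be open and $D\ge1$. For $\theta\in\Theta$ let $\Phi_\theta$ be a quantum channel on $D\times D$ complex matrices and $\rho_0=|\psi_0\rangle\langle\psi_0|$ a fixed pure input state. Canonical Kraus operators are $D\times D$ matrices $\Upsilon_1(\theta),\dots,\Upsilon_D(\theta)$, differentiable in $\theta$, with $\sum_k\Upsilon_k^\dagger\Upsilon_k=\mathbb{I}$, $\Phi_\theta(\rho)=\sum_k\Upsilon_k\rho\Upsilon_k^\dagger$, and $\mathrm{tr}\{\Upsilon_k\rho_0\Upsilon_j^\dagger\}=\delta_{jk}p_k(\theta)$. Write $\Upsilon_k(\theta)|\psi_0\rangle=\sqrt{p_k(\theta)}|w_k(\theta)\rangle$ with $\{|w_k(\theta)\rangle\}$ an orthonormal basis of $\mathbb{C}^D$ differentiable in $\theta$. Each $p_k$ is assumed either identically zero or strictly positive on $\Theta$. The multi-parameter Sarovar–Milburn bound is the $p\times p$ matrix $(C_\Upsilon)_{kl}=4\sum_i\mathrm{Re}\,\mathrm{tr}\{\frac{\partial\Upsilon_i}{\partial\theta^k}\rho_0(\frac{\partial\Upsilon_i}{\partial\theta^l})^\dagger\}$.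 *)

theory Defs
  imports "HOL-Analysis.Analysis"
begin

text \<open>Complex D-dimensional vectors are \<open>complex ^ 'd\<close>, D x D complex matrices are
  \<open>complex ^ 'd ^ 'd\<close> (D = CARD('d)); parameters theta live in \<open>real ^ 'p\<close> (p = CARD('p)).\<close>

definition braket :: "complex ^ 'd \<Rightarrow> complex ^ 'd \<Rightarrow> complex" where
  "braket x y = (\<Sum>i\<in>UNIV. cnj (x $ i) * y $ i)"

definition adj :: "complex ^ 'd ^ 'd \<Rightarrow> complex ^ 'd ^ 'd" where
  "adj A = (\<chi> i j. cnj (A $ j $ i))"

definition mtrace :: "complex ^ 'd ^ 'd \<Rightarrow> complex" where
  "mtrace A = (\<Sum>i\<in>UNIV. A $ i $ i)"

definition proj :: "complex ^ 'd \<Rightarrow> complex ^ 'd ^ 'd" where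
  "proj psi = (\<chi> i j. psi $ i * cnj (psi $ j))"

definition pderiv_at :: "(real ^ 'p \<Rightarrow> 'b::real_normed_vector) \<Rightarrow> real ^ 'p \<Rightarrow> 'p \<Rightarrow> 'b" where
  "pderiv_at f theta k = frechet_derivative f (at theta) (axis k 1)"

definition C_Upsilon ::
  "('d \<Rightarrow> real ^ 'p \<Rightarrow> complex ^ 'd ^ 'd) \<Rightarrow> complex ^ 'd \<Rightarrow> real ^ 'p \<Rightarrow> 'p \<Rightarrow> 'p \<Rightarrow> real" where
  "C_Upsilon Ups psi0 theta k l =
     4 * (\<Sum>i\<in>UNIV. Re (mtrace (pderiv_at (Ups i) theta k ** proj psi0 ** adj (pderiv_at (Ups i) theta l))))"

end

theory Submission
  imports Defs
begin

text \<open>Put \<open>G_i = \<Upsilon>_i \<psi>_0 = s_i w_i\<close> with \<open>s_i = \<surd>p_i\<close>. The trace identity gives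
  \<open>(C_\<Upsilon>)_kl = 4 \<Sum>_i Re \<langle>\<partial>_l G_i|\<partial>_k G_i\<rangle>\<close>, and \<open>\<partial>G_i = (\<partial>s_i) w_i + s_i \<partial>w_i\<close>.
  Differentiating the orthonormality of the \<open>w_i\<close> gives \<open>\<langle>\<partial>w_i|w_j\<rangle> = -\<langle>w_i|\<partial>w_j\<rangle>\<close>, in
  particular \<open>Re \<langle>w_i|\<partial>w_i\<rangle> = 0\<close>, so the cross terms drop out:
  \<open>Re \<langle>\<partial>_l G_i|\<partial>_k G_i\<rangle> = \<partial>_k s_i \<partial>_l s_i + p_i Re \<langle>\<partial>_k w_i|\<partial>_l w_i\<rangle>\<close>.
  Summed over \<open>i\<close>, the first term is the classical Fisher information
  \<open>\<Sum> \<partial>_k p_i \<partial>_l p_i / (4 p_i)\<close> (it vanishes where \<open>p_i \<equiv> 0\<close>). Expanding the second in the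
  basis \<open>w_j\<close> gives \<open>p_i Re B_ij\<close> with \<open>B_ij = \<langle>\<partial>_k w_i|w_j\<rangle>\<langle>w_j|\<partial>_l w_i\<rangle>\<close>; by the skew
  relation \<open>Re B_ij\<close> is symmetric, so the off-diagonal terms pair up into \<open>(p_i + p_j) Re B_ij\<close>
  over \<open>i < j\<close>.\<close>

lemma braket_cnj: "cnj (braket x y) = braket y x"
  by (simp add: braket_def mult.commute)

lemma braket_add_left: "braket (x + y) z = braket x z + braket y z"
  by (simp add: braket_def sum.distrib distrib_right)

lemma braket_add_right: "braket z (x + y) = braket z x + braket z y"
  by (simp add: braket_def sum.distrib distrib_left)

lemma braket_scaleR_left: "braket (r *\<^sub>R x) y = complex_of_real r * braket x y"
  by (simp add: braket_def sum_distrib_left) (simp add: scaleR_conv_of_real mult.assoc)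

lemma braket_scaleR_right: "braket x (r *\<^sub>R y) = complex_of_real r * braket x y"
  by (simp add: braket_def sum_distrib_left) (simp add: scaleR_conv_of_real algebra_simps)

lemma Re_braket_self_nonneg: "0 \<le> Re (braket x x)"
  by (simp add: braket_def sum_nonneg)

lemma Re_braket_commute: "Re (braket x y) = Re (braket y x)"
  by (subst braket_cnj[symmetric]) simp

lemma vector_scalar_mult_of_real: "complex_of_real r *s x = r *\<^sub>R x"
  by (simp add: vec_eq_iff) (simp add: scaleR_conv_of_real)

lemma mtrace_mult_proj_adj: "mtrace (A ** proj psi ** adj B) = braket (B *v psi) (A *v psi)"
proof -
  have "mtrace (A ** proj psi ** adj B) =
      (\<Sum>i\<in>UNIV. \<Sum>m\<in>UNIV. \<Sum>j\<in>UNIV. A $ i $ j * psi $ j * cnj (psi $ m) * cnj (B $ i $ m))"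
    by (simp add: mtrace_def matrix_matrix_mult_def proj_def adj_def
        sum_distrib_left sum_distrib_right mult.assoc)
  also have "\<dots> = braket (B *v psi) (A *v psi)"
    by (simp add: braket_def matrix_vector_mult_def sum_distrib_left sum_distrib_right mult_ac)
  finally show ?thesis .
qed

text \<open>An orthonormal family indexed by \<open>'d\<close> in \<open>complex ^ 'd\<close> is a basis; completeness is
  obtained by reading orthonormality as \<open>W\<^sup>\<dagger> W = 1\<close> and inverting to \<open>W W\<^sup>\<dagger> = 1\<close>.\<close>
lemma braket_orthonormal_expansion:
  fixes w :: "'d::finite \<Rightarrow> complex ^ 'd"
  assumes orthonormal: "\<And>i j. braket (w i) (w j) = (if i = j then 1 else 0)"
  shows "braket x y = (\<Sum>j\<in>UNIV. braket x (w j) * braket (w j) y)"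
proof -
  define W :: "complex ^'d^'d" where "W = (\<chi> a j. w j $ a)"
  have "adj W ** W = mat 1"
    using orthonormal by (simp add: W_def adj_def matrix_matrix_mult_def mat_def braket_def vec_eq_iff)
  hence "W ** adj W = mat 1"
    using matrix_left_right_inverse by blast
  hence completeness: "(\<Sum>j\<in>UNIV. w j $ a * cnj (w j $ b)) = (if a = b then 1 else 0)" for a b
    by (simp add: W_def adj_def matrix_matrix_mult_def mat_def vec_eq_iff)
  have "(\<Sum>j\<in>UNIV. braket x (w j) * braket (w j) y)
      = (\<Sum>a\<in>UNIV. \<Sum>b\<in>UNIV. cnj (x $ a) * y $ b * (\<Sum>j\<in>UNIV. w j $ a * cnj (w j $ b)))"
    by (simp add: braket_def sum_distrib_left sum_distrib_right mult_ac)
       (subst sum.swap, rule sum.cong, simp, subst sum.swap, simp)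
  also have "\<dots> = braket x y"
    by (simp add: completeness braket_def if_distrib cong: if_cong)
  finally show ?thesis by simp
qed

lemma has_derivative_braket:
  assumes "(f has_derivative f') (at x)" "(g has_derivative g') (at x)"
  shows "((\<lambda>t. braket (f t) (g t)) has_derivative
    (\<lambda>h. braket (f' h) (g x) + braket (f x) (g' h))) (at x)"
proof -
  have components: "((\<lambda>t. f t $ a) has_derivative (\<lambda>h. f' h $ a)) (at x)"
      "((\<lambda>t. g t $ a) has_derivative (\<lambda>h. g' h $ a)) (at x)" for a
    using bounded_linear.has_derivative[OF bounded_linear_vec_nth assms(1)]
          bounded_linear.has_derivative[OF bounded_linear_vec_nth assms(2)] by auto
  have "((\<lambda>t. \<Sum>a\<in>UNIV. cnj (f t $ a) * g t $ a) has_derivative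
     (\<lambda>h. \<Sum>a\<in>UNIV. cnj (f x $ a) * (g' h $ a) + cnj (f' h $ a) * g x $ a)) (at x)"
    by (intro has_derivative_sum has_derivative_mult has_derivative_cnj components)
  moreover have "(\<lambda>h. \<Sum>a\<in>UNIV. cnj (f x $ a) * (g' h $ a) + cnj (f' h $ a) * g x $ a)
      = (\<lambda>h. braket (f' h) (g x) + braket (f x) (g' h))"
    by (simp add: braket_def sum.distrib add.commute)
  ultimately show ?thesis by (simp add: braket_def)
qed

lemma bounded_linear_matrix_vector_mult_left: "bounded_linear (\<lambda>A::complex^'n^'m. A *v v)"
proof -
  have "linear (\<lambda>A::complex^'n^'m. A *v v)"
    by (rule linearI) (simp_all add: matrix_vector_mult_def vec_eq_iff scaleR_sum_right
        distrib_right sum.distrib)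
  thus ?thesis by (simp add: linear_conv_bounded_linear)
qed

lemma has_derivative_unique_on_open:
  assumes "(f has_derivative f') (at x)" "(g has_derivative g') (at x)"
    and "open S" "x \<in> S" "\<And>y. y \<in> S \<Longrightarrow> f y = g y"
  shows "f' = g'"
proof -
  have "(f has_derivative g') (at x)"
    by (rule has_derivative_transform_within_open[OF assms(2-4)]) (simp add: assms(5))
  with assms(1) show ?thesis by (rule has_derivative_unique)
qed

lemma Re_braket_unit_plus_tangent:
  assumes "braket w w = 1" "Re (braket w x) = 0" "Re (braket w y) = 0"
  shows "Re (braket (a *\<^sub>R w + s *\<^sub>R x) (b *\<^sub>R w + s *\<^sub>R y)) = a * b + s\<^sup>2 * Re (braket x y)"
  using assms Re_braket_commute[of x w]
  by (simp add: braket_add_left braket_add_right braket_scaleR_left braket_scaleR_right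
      power2_eq_square algebra_simps)

lemma sum_sum_symmetric_split_less:
  fixes R :: "'a::{finite,linorder} \<Rightarrow> 'a \<Rightarrow> real" and P :: "'a \<Rightarrow> real"
  assumes symmetric: "\<And>i j. R j i = R i j"
  shows "(\<Sum>i\<in>UNIV. \<Sum>j\<in>UNIV. P i * R i j) =
    (\<Sum>i\<in>UNIV. P i * R i i) + (\<Sum>(i,j)\<in>{(i,j). i < j}. (P i + P j) * R i j)"
proof -
  let ?f = "\<lambda>(i,j). P i * R i j"
  let ?A = "{(i::'a,j). i < j}" and ?D = "{(i::'a,j). i = j}" and ?A' = "{(i::'a,j). j < i}"
  have UNIV_split: "UNIV = ?A \<union> (?D \<union> ?A')" by auto
  have "(\<Sum>i\<in>UNIV. \<Sum>j\<in>UNIV. P i * R i j) = sum ?f UNIV"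
    by (simp add: sum.cartesian_product)
  also have "\<dots> = sum ?f ?A + (sum ?f ?D + sum ?f ?A')"
    unfolding UNIV_split by (subst sum.union_disjoint, auto, subst sum.union_disjoint, auto)
  also have "sum ?f ?D = (\<Sum>i\<in>UNIV. P i * R i i)"
  proof -
    have "?D = (\<lambda>i. (i,i)) ` UNIV" by auto
    thus ?thesis by (simp add: sum.reindex inj_on_def)
  qed
  also have "sum ?f ?A' = (\<Sum>(i,j)\<in>?A. P j * R i j)"
  proof -
    have "?A' = prod.swap ` ?A" by auto
    hence "sum ?f ?A' = sum (?f \<circ> prod.swap) ?A" by (simp add: sum.reindex)
    thus ?thesis by (simp add: case_prod_unfold symmetric)
  qed
  finally show ?thesis
    by (simp add: sum.distrib[symmetric] case_prod_unfold distrib_right)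
qed

abbreviation fderiv ::
    "('a::real_normed_vector \<Rightarrow> 'b::real_normed_vector) \<Rightarrow> 'a \<Rightarrow> 'a \<Rightarrow> 'b" where
  "fderiv f x \<equiv> frechet_derivative f (at x)"

locale canonical_kraus_family =
  fixes Theta :: "(real ^ 'p) set"
    and Ups :: "'d::finite \<Rightarrow> real ^ 'p \<Rightarrow> complex ^ 'd ^ 'd"
    and psi0 :: "complex ^ 'd"
    and p :: "'d \<Rightarrow> real ^ 'p \<Rightarrow> real"
    and w :: "'d \<Rightarrow> real ^ 'p \<Rightarrow> complex ^ 'd"
  assumes open_Theta: "open Theta"
    and Ups_differentiable: "\<And>i t. t \<in> Theta \<Longrightarrow> Ups i differentiable (at t)"
    and mtrace_Ups_proj: "\<And>i t. t \<in> Theta \<Longrightarrow>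
           mtrace (Ups i t ** proj psi0 ** adj (Ups i t)) = complex_of_real (p i t)"
    and Ups_psi0: "\<And>i t. t \<in> Theta \<Longrightarrow>
           Ups i t *v psi0 = complex_of_real (sqrt (p i t)) *s w i t"
    and w_orthonormal: "\<And>i j t. t \<in> Theta \<Longrightarrow>
           braket (w i t) (w j t) = (if i = j then 1 else 0)"
    and w_differentiable: "\<And>i t. t \<in> Theta \<Longrightarrow> w i differentiable (at t)"
    and p_dichotomy: "\<And>i. (\<forall>t\<in>Theta. p i t = 0) \<or> (\<forall>t\<in>Theta. p i t > 0)"
begin

text \<open>This is \<open>\<surd>p_i\<close> on \<open>Theta\<close>, written so as to be differentiable also where
  \<open>p_i\<close> vanishes.\<close>
definition amplitude :: "'d \<Rightarrow> real ^ 'p \<Rightarrow> real" where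
  "amplitude i t = Re (braket (w i t) (Ups i t *v psi0))"

lemma p_nonneg: "t \<in> Theta \<Longrightarrow> 0 \<le> p i t"
  using mtrace_Ups_proj[of t i] Re_braket_self_nonneg[of "Ups i t *v psi0"]
  by (metis Re_complex_of_real mtrace_mult_proj_adj)

lemma amplitude_eq_sqrt: "t \<in> Theta \<Longrightarrow> amplitude i t = sqrt (p i t)"
  by (simp add: amplitude_def Ups_psi0 vector_scalar_mult_of_real braket_scaleR_right
      w_orthonormal)

lemma Ups_psi0_amplitude: "t \<in> Theta \<Longrightarrow> Ups i t *v psi0 = amplitude i t *\<^sub>R w i t"
  by (simp add: amplitude_eq_sqrt Ups_psi0 vector_scalar_mult_of_real)

lemma p_eq_amplitude_square: "t \<in> Theta \<Longrightarrow> p i t = (amplitude i t)\<^sup>2"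
  by (simp add: amplitude_eq_sqrt p_nonneg)

definition frame_overlap ::
    "real ^ 'p \<Rightarrow> real ^ 'p \<Rightarrow> real ^ 'p \<Rightarrow> 'd \<Rightarrow> 'd \<Rightarrow> complex" where
  "frame_overlap \<theta> h h' i j =
    braket (fderiv (w i) \<theta> h) (w j \<theta>) * braket (w j \<theta>) (fderiv (w i) \<theta> h')"

context
  fixes \<theta> :: "real ^ 'p"
  assumes \<theta>_in: "\<theta> \<in> Theta"
begin

lemma has_derivative_Ups: "(Ups i has_derivative fderiv (Ups i) \<theta>) (at \<theta>)"
  using Ups_differentiable[OF \<theta>_in] frechet_derivative_works by blast

lemma has_derivative_w: "(w i has_derivative fderiv (w i) \<theta>) (at \<theta>)"
  using w_differentiable[OF \<theta>_in] frechet_derivative_works by blast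

lemma has_derivative_Ups_psi0:
  "((\<lambda>t. Ups i t *v psi0) has_derivative (\<lambda>h. fderiv (Ups i) \<theta> h *v psi0)) (at \<theta>)"
  using bounded_linear_matrix_vector_mult_left has_derivative_Ups
  by (rule bounded_linear.has_derivative)

lemma has_derivative_amplitude:
  "(amplitude i has_derivative fderiv (amplitude i) \<theta>) (at \<theta>)"
proof -
  have "(amplitude i has_derivative (\<lambda>h. Re (braket (fderiv (w i) \<theta> h) (Ups i \<theta> *v psi0)
      + braket (w i \<theta>) (fderiv (Ups i) \<theta> h *v psi0)))) (at \<theta>)"
    unfolding amplitude_def[abs_def]
    by (intro has_derivative_Re has_derivative_braket has_derivative_w has_derivative_Ups_psi0)
  thus ?thesis using differentiableI frechet_derivative_works by blast
qed

lemma w_derivative_skew: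
  "braket (fderiv (w i) \<theta> h) (w j \<theta>) + braket (w i \<theta>) (fderiv (w j) \<theta> h) = 0"
proof -
  have "(\<lambda>h. braket (fderiv (w i) \<theta> h) (w j \<theta>) + braket (w i \<theta>) (fderiv (w j) \<theta> h))
      = (\<lambda>h. 0)"
    by (rule has_derivative_unique_on_open[OF
          has_derivative_braket[OF has_derivative_w has_derivative_w]
          has_derivative_const open_Theta \<theta>_in])
       (simp add: w_orthonormal)
  from fun_cong[OF this, of h] show ?thesis by simp
qed

lemma Re_braket_w_derivative: "Re (braket (w i \<theta>) (fderiv (w i) \<theta> h)) = 0"
  using arg_cong[OF w_derivative_skew[of i h i], of Re] Re_braket_commute[of "w i \<theta>"] by simp

lemma Ups_derivative_psi0:
  "fderiv (Ups i) \<theta> h *v psi0 =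
    fderiv (amplitude i) \<theta> h *\<^sub>R w i \<theta> + amplitude i \<theta> *\<^sub>R fderiv (w i) \<theta> h"
proof -
  have "(\<lambda>h. fderiv (Ups i) \<theta> h *v psi0) =
      (\<lambda>h. amplitude i \<theta> *\<^sub>R fderiv (w i) \<theta> h + fderiv (amplitude i) \<theta> h *\<^sub>R w i \<theta>)"
    by (rule has_derivative_unique_on_open[OF has_derivative_Ups_psi0
          has_derivative_scaleR[OF has_derivative_amplitude has_derivative_w] open_Theta \<theta>_in])
       (simp add: Ups_psi0_amplitude)
  from fun_cong[OF this, of h] show ?thesis
    by (simp add: add.commute)
qed

lemma amplitude_derivative_vanishing:
  assumes "\<not> p i \<theta> > 0"
  shows "fderiv (amplitude i) \<theta> = (\<lambda>h. 0)"
proof -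
  have "\<forall>t\<in>Theta. p i t = 0"
    using p_dichotomy[of i] assms \<theta>_in by auto
  thus ?thesis
    by (intro has_derivative_unique_on_open[OF has_derivative_amplitude has_derivative_const
          open_Theta \<theta>_in])
       (simp add: amplitude_eq_sqrt)
qed

lemma pderiv_p:
  "pderiv_at (p i) \<theta> k = 2 * amplitude i \<theta> * fderiv (amplitude i) \<theta> (axis k 1)"
proof -
  have "((\<lambda>t. amplitude i t * amplitude i t) has_derivative
      (\<lambda>h. 2 * amplitude i \<theta> * fderiv (amplitude i) \<theta> h)) (at \<theta>)"
    using has_derivative_mult[OF has_derivative_amplitude has_derivative_amplitude, of i i]
    by (simp add: algebra_simps)
  hence "(p i has_derivative (\<lambda>h. 2 * amplitude i \<theta> * fderiv (amplitude i) \<theta> h)) (at \<theta>)"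
    by (rule has_derivative_transform_within_open[OF _ open_Theta \<theta>_in])
       (simp add: p_eq_amplitude_square power2_eq_square)
  thus ?thesis
    unfolding pderiv_at_def by (simp add: frechet_derivative_at[symmetric])
qed

lemma sum_frame_overlap:
  "(\<Sum>j\<in>UNIV. frame_overlap \<theta> h h' i j) =
    braket (fderiv (w i) \<theta> h) (fderiv (w i) \<theta> h')"
  unfolding frame_overlap_def
  by (rule braket_orthonormal_expansion[symmetric]) (simp add: w_orthonormal \<theta>_in)

lemma Re_frame_overlap_commute:
  "Re (frame_overlap \<theta> h h' j i) = Re (frame_overlap \<theta> h h' i j)"
proof -
  have "braket (fderiv (w j) \<theta> h) (w i \<theta>) = - braket (w j \<theta>) (fderiv (w i) \<theta> h)"
    "braket (w i \<theta>) (fderiv (w j) \<theta> h') = - braket (fderiv (w i) \<theta> h') (w j \<theta>)"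
    using w_derivative_skew[of j h i] w_derivative_skew[of i h' j]
    by (simp_all add: eq_neg_iff_add_eq_0 add.commute)
  hence "frame_overlap \<theta> h h' j i = cnj (frame_overlap \<theta> h h' i j)"
    by (simp add: frame_overlap_def braket_cnj mult.commute)
  thus ?thesis by simp
qed

lemma frame_overlap_diagonal_real:
  "frame_overlap \<theta> h h' i i = complex_of_real (Re (frame_overlap \<theta> h h' i i))"
  using Re_braket_w_derivative[of i h] Re_braket_w_derivative[of i h']
    Re_braket_commute[of "w i \<theta>"]
  by (simp add: frame_overlap_def complex_eq_iff)

lemma Re_braket_Ups_derivative_psi0:
  "Re (braket (fderiv (Ups i) \<theta> h' *v psi0) (fderiv (Ups i) \<theta> h *v psi0)) =
    fderiv (amplitude i) \<theta> h * fderiv (amplitude i) \<theta> h'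
    + p i \<theta> * Re (\<Sum>j\<in>UNIV. frame_overlap \<theta> h h' i j)"
  unfolding Ups_derivative_psi0 sum_frame_overlap
  by (subst Re_braket_unit_plus_tangent)
     (simp_all add: w_orthonormal \<theta>_in Re_braket_w_derivative p_eq_amplitude_square
        Re_braket_commute)

lemma C_Upsilon_eq_amplitude_frame_overlap:
  "C_Upsilon Ups psi0 \<theta> k l =
    4 * (\<Sum>i\<in>UNIV. fderiv (amplitude i) \<theta> (axis k 1) * fderiv (amplitude i) \<theta> (axis l 1))
    + 4 * (\<Sum>i\<in>UNIV. \<Sum>j\<in>UNIV. p i \<theta> * Re (frame_overlap \<theta> (axis k 1) (axis l 1) i j))"
  by (simp add: C_Upsilon_def pderiv_at_def mtrace_mult_proj_adj Re_braket_Ups_derivative_psi0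
      sum.distrib sum_distrib_left distrib_left)

lemma fisher_information_amplitude:
  "(\<Sum>i\<in>{i. p i \<theta> > 0}. 1 / p i \<theta> * pderiv_at (p i) \<theta> k * pderiv_at (p i) \<theta> l) =
    4 * (\<Sum>i\<in>UNIV. fderiv (amplitude i) \<theta> (axis k 1) * fderiv (amplitude i) \<theta> (axis l 1))"
proof -
  let ?ds = "\<lambda>i. fderiv (amplitude i) \<theta> (axis k 1) * fderiv (amplitude i) \<theta> (axis l 1)"
  have "1 / p i \<theta> * pderiv_at (p i) \<theta> k * pderiv_at (p i) \<theta> l = 4 * ?ds i"
    if "p i \<theta> > 0" for i
  proof -
    have "amplitude i \<theta> \<noteq> 0"
      using that p_eq_amplitude_square[OF \<theta>_in, of i] by auto
    thus ?thesis
      by (simp add: pderiv_p p_eq_amplitude_square[OF \<theta>_in] power2_eq_square field_simps)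
  qed
  hence "(\<Sum>i\<in>{i. p i \<theta> > 0}. 1 / p i \<theta> * pderiv_at (p i) \<theta> k * pderiv_at (p i) \<theta> l) =
      4 * (\<Sum>i\<in>{i. p i \<theta> > 0}. ?ds i)"
    by (simp add: sum_distrib_left)
  also have "(\<Sum>i\<in>{i. p i \<theta> > 0}. ?ds i) = (\<Sum>i\<in>UNIV. ?ds i)"
    by (rule sum.mono_neutral_left) (auto simp: amplitude_derivative_vanishing)
  finally show ?thesis .
qed

lemma sum_diagonal_frame_overlap:
  "(\<Sum>i\<in>{i. p i \<theta> > 0}. complex_of_real (p i \<theta>) * frame_overlap \<theta> h h' i i) =
    complex_of_real (\<Sum>i\<in>UNIV. p i \<theta> * Re (frame_overlap \<theta> h h' i i))"
proof -
  have "(\<Sum>i\<in>{i. p i \<theta> > 0}. complex_of_real (p i \<theta>) * frame_overlap \<theta> h h' i i) =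
      (\<Sum>i\<in>{i. p i \<theta> > 0}. complex_of_real (p i \<theta> * Re (frame_overlap \<theta> h h' i i)))"
    by (subst frame_overlap_diagonal_real) simp
  also have "\<dots> = (\<Sum>i\<in>UNIV. complex_of_real (p i \<theta> * Re (frame_overlap \<theta> h h' i i)))"
    using p_nonneg[OF \<theta>_in] by (intro sum.mono_neutral_left) (auto simp: order.order_iff_strict)
  finally show ?thesis by simp
qed

end

end

theorem proposition3p6:
  fixes Theta :: "(real ^ 'p) set"
    and Ups :: "'d::{finite,linorder} \<Rightarrow> real ^ 'p \<Rightarrow> ((complex, 'd) vec, 'd) vec"
    and psi0 :: "(complex, 'd) vec"
    and p :: "'d \<Rightarrow> real ^ 'p \<Rightarrow> real"
    and w :: "'d \<Rightarrow> real ^ 'p \<Rightarrow> (complex, 'd) vec"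
  assumes Theta_open: "open Theta"
    and psi0_pure: "braket psi0 psi0 = 1"
    and Ups_diff: "\<And>i theta. theta \<in> Theta \<Longrightarrow> Ups i differentiable (at theta)"
    and Ups_complete: "\<And>theta. theta \<in> Theta \<Longrightarrow> (\<Sum>i\<in>UNIV. adj (Ups i theta) ** Ups i theta) = mat 1"
    and Ups_canonical: "\<And>theta j k. theta \<in> Theta \<Longrightarrow>
           mtrace (Ups k theta ** proj psi0 ** adj (Ups j theta)) = (if j = k then complex_of_real (p k theta) else 0)"
    and Ups_psi0: "\<And>theta k. theta \<in> Theta \<Longrightarrow>
           Ups k theta *v psi0 = complex_of_real (sqrt (p k theta)) *s w k theta"
    and w_orthonormal: "\<And>theta i j. theta \<in> Theta \<Longrightarrow>
           braket (w i theta) (w j theta) = (if i = j then 1 else 0)"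
    and w_diff: "\<And>i theta. theta \<in> Theta \<Longrightarrow> w i differentiable (at theta)"
    and p_dichotomy: "\<And>i. (\<forall>theta\<in>Theta. p i theta = 0) \<or> (\<forall>theta\<in>Theta. p i theta > 0)"
    and theta_in: "theta \<in> Theta"
  shows "complex_of_real (C_Upsilon Ups psi0 theta k l) =
      complex_of_real (\<Sum>i\<in>{i. p i theta > 0}.
          1 / p i theta * pderiv_at (p i) theta k * pderiv_at (p i) theta l)
    + complex_of_real (4 * Re (\<Sum>(i, j)\<in>{(i, j). i < j}.
          complex_of_real (p i theta + p j theta)
          * braket (pderiv_at (w i) theta k) (w j theta)
          * braket (w j theta) (pderiv_at (w i) theta l)))
    + 4 * (\<Sum>i\<in>{i. p i theta > 0}.
          complex_of_real (p i theta)
          * braket (pderiv_at (w i) theta k) (w i theta)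
          * braket (w i theta) (pderiv_at (w i) theta l))"
proof -
  interpret canonical_kraus_family Theta Ups psi0 p w
    by unfold_locales
      (simp_all add: Theta_open Ups_diff Ups_canonical Ups_psi0 w_orthonormal w_diff p_dichotomy)
  let ?B = "frame_overlap theta (axis k 1) (axis l 1)"
  have diagonal_split: "(\<Sum>i\<in>UNIV. \<Sum>j\<in>UNIV. p i theta * Re (?B i j)) =
      (\<Sum>i\<in>UNIV. p i theta * Re (?B i i))
      + (\<Sum>(i, j)\<in>{(i, j). i < j}. (p i theta + p j theta) * Re (?B i j))"
    by (rule sum_sum_symmetric_split_less) (rule Re_frame_overlap_commute[OF theta_in])
  have pairs: "Re (\<Sum>(i, j)\<in>{(i, j). i < j}. complex_of_real (p i theta + p j theta)
          * braket (pderiv_at (w i) theta k) (w j theta) * braket (w j theta) (pderiv_at (w i) theta l))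
      = (\<Sum>(i, j)\<in>{(i, j). i < j}. (p i theta + p j theta) * Re (?B i j))"
    by (simp add: Re_sum case_prod_unfold frame_overlap_def pderiv_at_def mult.assoc)
  have diagonal: "(\<Sum>i\<in>{i. p i theta > 0}. complex_of_real (p i theta)
          * braket (pderiv_at (w i) theta k) (w i theta) * braket (w i theta) (pderiv_at (w i) theta l))
      = complex_of_real (\<Sum>i\<in>UNIV. p i theta * Re (?B i i))"
    using sum_diagonal_frame_overlap[OF theta_in]
    by (simp add: frame_overlap_def pderiv_at_def mult.assoc)
  show ?thesis
    unfolding C_Upsilon_eq_amplitude_frame_overlap[OF theta_in]
      fisher_information_amplitude[OF theta_in] pairs diagonal diagonal_split
    by (simp add: algebra_simps)
qed

end
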